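(* Let $q$ be a prime power and $m,n$ positive integers. Let $\alpha,\beta\in\mathbb{F}_{q^2}^*$ be distinct with $\alpha^{q+1}=\beta^{q+1}=1$, and let $\varepsilon\in\mathbb{F}_{q^2}^*$. Then $$f(x)=(x+\alpha x^q)^m+\varepsilon(x+\beta x^q)^n$$ is a permutation polynomial of $\mathbb{F}_{q^2}$ if and only if $\gcd(mn,q-1)=1$ and $\varepsilon^{q-1}\alpha^m\neq\beta^n$.
   Context: A polynomial is a permutation polynomial of $\mathbb{F}_{q^2}$ if the map it induces on $\mathbb{F}_{q^2}$ is bijective. *)

theory Defs
  imports "HOL-Number_Theory.Number_Theory"
begin

text \<open>A permutation polynomial of a finite field: the induced map is bijective.
  We represent F_{q^2} by a finite field type of cardinality q^2.\<close>

definition is_permutation_map :: "('a \<Rightarrow> 'a) \<Rightarrow> bool" where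
  "is_permutation_map f \<longleftrightarrow> bij f"

end

theory Submission
  imports Defs "HOL-Computational_Algebra.Polynomial" "HOL-Library.Cardinality"
begin

text \<open>
  Write L(\<gamma>) = {y. \<gamma> y^q = y}. If \<gamma>^(q+1) = 1, then x + \<gamma> x^q lies in L(\<gamma>), and for
  \<alpha> \<noteq> \<beta> the map x \<mapsto> (x + \<alpha> x^q, x + \<beta> x^q) is injective; as every L(\<gamma>) has at most q
  points, counting makes it a bijection onto L(\<alpha>) \<times> L(\<beta>), both lines having exactly q points.
  So f permutes the field iff (u, v) \<mapsto> u^m + \<epsilon> v^n is injective on L(\<alpha>) \<times> L(\<beta>).
  A line with q points is {0} \<union> c \<mu>_(q-1), so u \<mapsto> u^m is injective on it iff gcd m (q-1) = 1.
  Finally u^m lies in L(\<alpha>^m) and \<epsilon> v^n in L(\<beta>^n / \<epsilon>^(q-1)). If these lines coincide,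
  i.e. \<epsilon>^(q-1) \<alpha>^m = \<beta>^n, all q^2 values fall into one line of q points; otherwise the two
  lines meet only in 0, which forces injectivity.
\<close>

lemma power_card_minus_one_eq_one:
  fixes x :: "'a::{field,finite}"
  assumes "x \<noteq> 0"
  shows "x ^ (CARD('a) - 1) = 1"
proof -
  let ?U = "UNIV - {0::'a}"
  have card_U: "card ?U = CARD('a) - 1"
    by (simp add: card_Diff_singleton)
  have "(\<Prod>y\<in>?U. x * y) = (\<Prod>y\<in>?U. y)"
    by (rule prod.reindex_bij_witness[of _ "\<lambda>y. y / x" "\<lambda>y. x * y"]) (use assms in auto)
  then have "x ^ card ?U * (\<Prod>y\<in>?U. y) = 1 * (\<Prod>y\<in>?U. y)"
    by (simp add: prod.distrib)
  moreover have "(\<Prod>y\<in>?U. y) \<noteq> 0"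
    by simp
  ultimately show ?thesis
    using card_U by (metis mult_right_cancel)
qed

lemma power_card_eq_self:
  fixes x :: "'a::{field,finite}"
  shows "x ^ CARD('a) = x"
proof (cases "x = 0")
  case False
  have "x ^ CARD('a) = x * x ^ (CARD('a) - 1)"
    by (simp flip: power_Suc)
  then show ?thesis
    using power_card_minus_one_eq_one[OF False] by simp
qed simp

lemma CHAR_eq_prime_of_card:
  assumes "prime p" and "CARD('a::{field,finite}) = p ^ k"
  shows "CHAR('a) = p"
proof -
  have "prime CHAR('a)"
    by (intro prime_CHAR_semidom finite_imp_CHAR_pos) simp
  moreover have "CHAR('a) dvd p ^ k"
    using CHAR_dvd_CARD[where 'a='a] assms(2) by simp
  ultimately show ?thesis
    using assms(1) prime_dvd_power primes_dvd_imp_eq by blast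
qed

lemma frobenius_add:
  fixes x y :: "'a::{field,finite}"
  assumes "primepow q" and "CARD('a) = q ^ j" and "j > 0"
  shows "(x + y) ^ q = x ^ q + y ^ q"
proof -
  obtain p k where "prime p" "q = p ^ k"
    using assms(1) by (auto simp: primepow_def)
  moreover have "CHAR('a) = p"
    using CHAR_eq_prime_of_card[of p "k * j"] assms(2) calculation by (simp add: power_mult)
  ultimately show ?thesis
    using freshmans_dream' by blast
qed

lemma binomial_roots_eq_poly_roots:
  fixes c d :: "'a::idom"
  assumes "c \<noteq> 0" and "j < k"
  obtains p where "p \<noteq> 0" and "degree p \<le> k" and "{x. c * x ^ k = d * x ^ j} = {x. poly p x = 0}"
proof
  let ?p = "monom c k - monom d j"
  have "coeff ?p k = c"
    using assms(2) by simp
  then show "?p \<noteq> 0"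
    using assms(1) by (metis coeff_0)
  show "degree ?p \<le> k"
    using assms(2) by (intro degree_diff_le) (auto intro: order.trans[OF degree_monom_le])
  show "{x. c * x ^ k = d * x ^ j} = {x. poly ?p x = 0}"
    by (simp add: poly_monom)
qed

lemma finite_roots_binomial:
  assumes "(c::'a::idom) \<noteq> 0" and "j < k"
  shows "finite {x. c * x ^ k = d * x ^ j}"
proof -
  obtain p where "p \<noteq> 0" and "{x. c * x ^ k = d * x ^ j} = {x. poly p x = 0}"
    using binomial_roots_eq_poly_roots[OF assms] .
  then show ?thesis
    by (simp add: poly_roots_finite)
qed

lemma card_roots_binomial_le:
  assumes "(c::'a::idom) \<noteq> 0" and "j < k"
  shows "card {x. c * x ^ k = d * x ^ j} \<le> k"
proof -
  obtain p where "p \<noteq> 0" and "degree p \<le> k" and "{x. c * x ^ k = d * x ^ j} = {x. poly p x = 0}"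
    using binomial_roots_eq_poly_roots[OF assms] .
  then show ?thesis
    using card_poly_roots_bound[of p] by simp
qed

lemma finite_roots_of_unity:
  "N > 0 \<Longrightarrow> finite {w::'a::idom. w ^ N = 1}"
  using finite_roots_binomial[of 1 0 N 1] by simp

lemma card_roots_of_unity_le:
  "N > 0 \<Longrightarrow> card {w::'a::idom. w ^ N = 1} \<le> N"
  using card_roots_binomial_le[of 1 0 N 1] by simp

lemma inj_on_power_roots_of_unity:
  assumes "coprime k N" and "N > 0"
  shows "inj_on (\<lambda>w. w ^ k) {w::'a::field. w ^ N = 1}"
proof (cases "k = 0")
  case True
  then have "N = 1"
    using \<open>coprime k N\<close> by simp
  then show ?thesis
    by (simp add: inj_on_def)
next
  case False
  obtain x y where "k * x = N * y + gcd k N"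
    using bezout_nat[OF False, of N] by blast
  moreover have "gcd k N = 1"
    using \<open>coprime k N\<close> by (simp only: coprime_iff_gcd_eq_1)
  ultimately have bezout: "k * x = N * y + 1"
    by simp
  show ?thesis
  proof (rule inj_onI)
    fix w1 w2 :: 'a
    assume "w1 \<in> {w. w ^ N = 1}" "w2 \<in> {w. w ^ N = 1}" and eq: "w1 ^ k = w2 ^ k"
    then have w1: "w1 ^ N = 1" and w2: "w2 ^ N = 1"
      by simp_all
    have "w2 \<noteq> 0"
      using w2 \<open>N > 0\<close> by (auto simp: power_0_left)
    define w where "w = w1 / w2"
    have "w ^ k = 1" and "w ^ N = 1"
      using eq w1 w2 \<open>w2 \<noteq> 0\<close> by (simp_all add: w_def power_divide)
    have "w = (w ^ N) ^ y * w"
      using \<open>w ^ N = 1\<close> by simp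
    also have "\<dots> = (w ^ k) ^ x"
      by (simp only: power_mult[symmetric] bezout power_add power_one_right)
    finally have "w = 1"
      using \<open>w ^ k = 1\<close> by simp
    then show "w1 = w2"
      using \<open>w2 \<noteq> 0\<close> by (simp add: w_def)
  qed
qed

lemma coprime_of_inj_on_power_roots_of_unity:
  assumes inj: "inj_on (\<lambda>w. w ^ k) {w::'a::field. w ^ N = 1}"
    and card_eq: "card {w::'a. w ^ N = 1} = N" and "N > 0"
  shows "coprime k N"
proof (rule ccontr)
  assume "\<not> coprime k N"
  define d where "d = gcd k N"
  have "d \<noteq> 1" and "d > 0"
    using \<open>\<not> coprime k N\<close> \<open>N > 0\<close> unfolding d_def coprime_iff_gcd_eq_1 by simp_all
  obtain e where e: "N = d * e"
    using gcd_dvd2[of k N] unfolding d_def by (rule dvdE)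
  obtain k' where k': "k = d * k'"
    using gcd_dvd1[of k N] unfolding d_def by (rule dvdE)
  have "e > 0" and "e < N"
    using e \<open>N > 0\<close> \<open>d > 0\<close> \<open>d \<noteq> 1\<close> by simp_all
  have "(\<lambda>w. w ^ k) ` {w::'a. w ^ N = 1} \<subseteq> {w. w ^ e = 1}"
  proof clarify
    fix w :: 'a
    assume "w ^ N = 1"
    have "(w ^ k) ^ e = (w ^ N) ^ k'"
      unfolding e k' by (simp add: power_mult[symmetric] ac_simps)
    then show "(w ^ k) ^ e = 1"
      using \<open>w ^ N = 1\<close> by simp
  qed
  then have "card {w::'a. w ^ N = 1} \<le> card {w::'a. w ^ e = 1}"
    by (rule card_inj_on_le[OF inj _ finite_roots_of_unity[OF \<open>e > 0\<close>]])
  then have "N \<le> e"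
    using card_eq card_roots_of_unity_le[OF \<open>e > 0\<close>, where 'a='a] by simp
  then show False
    using \<open>e < N\<close> by simp
qed

lemma inj_on_power_roots_of_unity_iff:
  assumes "card {w::'a::field. w ^ N = 1} = N" and "N > 0"
  shows "inj_on (\<lambda>w. w ^ k) {w::'a. w ^ N = 1} \<longleftrightarrow> coprime k N"
  using assms inj_on_power_roots_of_unity coprime_of_inj_on_power_roots_of_unity by blast

lemma inj_on_power_insert_zero_scaled_iff:
  fixes c :: "'a::field"
  assumes "c \<noteq> 0" and "k > 0" and "0 \<notin> U"
  shows "inj_on (\<lambda>u. u ^ k) (insert 0 ((\<lambda>w. c * w) ` U)) \<longleftrightarrow> inj_on (\<lambda>w. w ^ k) U"
proof -
  have scaled: "(c * w) ^ k = c ^ k * w ^ k" for w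
    by (rule power_mult_distrib)
  have nonzero: "(c * w) ^ k \<noteq> 0" if "w \<in> U" for w
    using assms that by auto
  have "inj_on (\<lambda>u. u ^ k) ((\<lambda>w. c * w) ` U) \<longleftrightarrow> inj_on (\<lambda>w. (c * w) ^ k) U"
    using comp_inj_on_iff[of "\<lambda>w. c * w" U "\<lambda>u. u ^ k"] assms(1)
    by (simp add: inj_on_def comp_def)
  also have "\<dots> \<longleftrightarrow> inj_on (\<lambda>w. w ^ k) U"
    using assms(1) by (simp add: inj_on_def scaled)
  finally show ?thesis
    using nonzero assms(2) by (auto simp: inj_on_insert power_0_left)
qed

text \<open>For \<gamma>^(q+1) = 1 in a field of q^2 elements this is a one-dimensional subspace over F_q.\<close>

definition frob_line :: "nat \<Rightarrow> 'a::field \<Rightarrow> 'a set" where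
  "frob_line q \<gamma> = {y. \<gamma> * y ^ q = y}"

lemma zero_in_frob_line: "q > 0 \<Longrightarrow> 0 \<in> frob_line q \<gamma>"
  by (simp add: frob_line_def)

lemma finite_frob_line:
  "\<gamma> \<noteq> 0 \<Longrightarrow> q \<ge> 2 \<Longrightarrow> finite (frob_line q \<gamma>)"
  using finite_roots_binomial[of \<gamma> 1 q 1] by (simp add: frob_line_def)

lemma card_frob_line_le:
  assumes "\<gamma> \<noteq> 0" and "q \<ge> 2"
  shows "card (frob_line q \<gamma>) \<le> q"
  using card_roots_binomial_le[OF assms(1), of 1 q 1] assms(2) by (simp add: frob_line_def)

lemma frob_line_diff:
  fixes u v :: "'a::field"
  assumes frob_add: "\<And>x y::'a. (x + y) ^ q = x ^ q + y ^ q"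
    and "u \<in> frob_line q \<gamma>" and "v \<in> frob_line q \<gamma>"
  shows "u - v \<in> frob_line q \<gamma>"
proof -
  have "(u - v) ^ q = u ^ q - v ^ q"
    using frob_add[of "u - v" v] by (simp add: algebra_simps)
  then show ?thesis
    using assms(2,3) by (simp add: frob_line_def right_diff_distrib)
qed

lemma frob_line_add:
  fixes u v :: "'a::field"
  assumes frob_add: "\<And>x y::'a. (x + y) ^ q = x ^ q + y ^ q"
    and "u \<in> frob_line q \<gamma>" and "v \<in> frob_line q \<gamma>"
  shows "u + v \<in> frob_line q \<gamma>"
  using assms(2,3) by (simp add: frob_line_def frob_add distrib_left)

lemma power_in_frob_line:
  assumes "u \<in> frob_line q \<gamma>"
  shows "u ^ k \<in> frob_line q (\<gamma> ^ k)"
proof -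
  have "\<gamma> ^ k * (u ^ k) ^ q = (\<gamma> * u ^ q) ^ k"
    by (simp add: power_mult_distrib flip: power_mult) (simp add: mult.commute)
  then show ?thesis
    using assms by (simp add: frob_line_def)
qed

lemma mult_in_frob_line:
  assumes "v \<in> frob_line q \<delta>" and "\<epsilon> \<noteq> 0" and "q > 0"
  shows "\<epsilon> * v \<in> frob_line q (\<delta> / \<epsilon> ^ (q - 1))"
proof -
  have "\<epsilon> ^ q = \<epsilon> * \<epsilon> ^ (q - 1)"
    using assms(3) by (simp flip: power_Suc)
  then show ?thesis
    using assms(1,2) by (simp add: frob_line_def power_mult_distrib field_simps)
qed

lemma frob_lines_disjoint:
  assumes "\<gamma> \<noteq> \<delta>" and "y \<in> frob_line q \<gamma>" and "y \<in> frob_line q \<delta>" and "q > 0"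
  shows "y = 0"
proof -
  have "(\<gamma> - \<delta>) * y ^ q = 0"
    using assms(2,3) by (simp add: frob_line_def left_diff_distrib)
  then show ?thesis
    using assms(1,4) by simp
qed

lemma frob_line_eq_scaled_roots_of_unity:
  assumes c: "c \<in> frob_line q \<gamma>" "c \<noteq> 0" and "q > 0"
  shows "frob_line q \<gamma> = insert 0 ((\<lambda>w. c * w) ` {w. w ^ (q - 1) = 1})"
proof (intro equalityI subsetI)
  have power_q: "x ^ q = x ^ (q - 1) * x" for x :: 'a
    using assms(3) by (simp flip: power_Suc2)
  have \<gamma>: "\<gamma> \<noteq> 0"
    using c by (auto simp: frob_line_def)
  fix y
  show "y \<in> insert 0 ((\<lambda>w. c * w) ` {w. w ^ (q - 1) = 1})" if y: "y \<in> frob_line q \<gamma>"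
  proof (cases "y = 0")
    case False
    have "y ^ q = y / \<gamma>" and "c ^ q = c / \<gamma>"
      using y c(1) \<gamma> by (simp_all add: frob_line_def field_simps)
    then have "(y / c) ^ q = y / c"
      using \<gamma> by (simp add: power_divide)
    then have "(y / c) ^ (q - 1) = 1"
      using False c(2) power_q[of "y / c"] by simp
    then show ?thesis
      by (intro insertI2 image_eqI[of y _ "y / c"]) (use c(2) in auto)
  qed (simp add: zero_in_frob_line assms(3))
  show "y \<in> frob_line q \<gamma>" if "y \<in> insert 0 ((\<lambda>w. c * w) ` {w. w ^ (q - 1) = 1})"
  proof -
    have "\<gamma> * (c * w) ^ q = c * w" if "w ^ (q - 1) = 1" for w
      using c(1) that power_q[of w] by (simp add: frob_line_def power_mult_distrib mult.assoc[symmetric])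
    then show ?thesis
      using that assms(3) by (auto simp: frob_line_def)
  qed
qed

lemma inj_on_power_frob_line_iff:
  assumes card_eq: "card (frob_line q \<gamma>) = q" and "q \<ge> 2" and "k > 0"
  shows "inj_on (\<lambda>u. u ^ k) (frob_line q \<gamma>) \<longleftrightarrow> coprime k (q - 1)"
proof -
  have "\<not> frob_line q \<gamma> \<subseteq> {0}"
    using card_mono[of "{0}" "frob_line q \<gamma>"] card_eq \<open>q \<ge> 2\<close> by auto
  then obtain c where c: "c \<in> frob_line q \<gamma>" "c \<noteq> 0"
    by blast
  let ?U = "{w::'a. w ^ (q - 1) = 1}"
  have line: "frob_line q \<gamma> = insert 0 ((\<lambda>w. c * w) ` ?U)"
    using frob_line_eq_scaled_roots_of_unity[OF c] \<open>q \<ge> 2\<close> by simp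
  have "0 \<notin> ?U"
    using \<open>q \<ge> 2\<close> by (simp add: power_0_left)
  moreover have "finite ?U"
    using \<open>q \<ge> 2\<close> by (intro finite_roots_of_unity) simp
  moreover have "card ((\<lambda>w. c * w) ` ?U) = card ?U"
    using c(2) by (intro card_image) (simp add: inj_on_def)
  ultimately have "card (frob_line q \<gamma>) = card ?U + 1"
    unfolding line using c(2) by (simp add: card_insert_disjoint image_iff)
  then have "card ?U = q - 1"
    using card_eq by simp
  then show ?thesis
    using inj_on_power_roots_of_unity_iff[of "q - 1" k]
      inj_on_power_insert_zero_scaled_iff[OF c(2) \<open>k > 0\<close> \<open>0 \<notin> ?U\<close>] line \<open>q \<ge> 2\<close>
    by simp
qed

lemma frob_trace_in_frob_line:
  fixes x :: "'a::field"
  assumes frob_add: "\<And>x y::'a. (x + y) ^ q = x ^ q + y ^ q"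
    and frob_invol: "\<And>x::'a. (x ^ q) ^ q = x"
    and "\<gamma> ^ (q + 1) = 1"
  shows "x + \<gamma> * x ^ q \<in> frob_line q \<gamma>"
proof -
  have "\<gamma> * (x + \<gamma> * x ^ q) ^ q = \<gamma> * x ^ q + \<gamma> ^ (q + 1) * (x ^ q) ^ q"
    by (simp add: frob_add power_mult_distrib algebra_simps)
  then show ?thesis
    using assms(3) by (simp add: frob_line_def frob_invol add.commute)
qed

lemma factors_eq_of_square_le:
  fixes a b q :: nat
  assumes "a \<le> q" and "b \<le> q" and "q * q \<le> a * b"
  shows "a = q \<and> b = q"
proof -
  have "a * b \<le> a * q" and "a * b \<le> q * b"
    using assms(1,2) by simp_all
  then have "q * q \<le> a * q" and "q * q \<le> q * b"
    using assms(3) by linarith+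
  then show ?thesis
    using assms(1,2) by (cases "q = 0") auto
qed

lemma frob_pair_bij:
  fixes \<alpha> \<beta> :: "'a::{field,finite}"
  assumes frob_add: "\<And>x y::'a. (x + y) ^ q = x ^ q + y ^ q"
    and frob_invol: "\<And>x::'a. (x ^ q) ^ q = x"
    and card: "CARD('a) = q ^ 2" and "q \<ge> 2"
    and "\<alpha> \<noteq> 0" and "\<beta> \<noteq> 0" and "\<alpha> \<noteq> \<beta>"
    and "\<alpha> ^ (q + 1) = 1" and "\<beta> ^ (q + 1) = 1"
  shows "bij_betw (\<lambda>x. (x + \<alpha> * x ^ q, x + \<beta> * x ^ q)) UNIV (frob_line q \<alpha> \<times> frob_line q \<beta>)"
    and "card (frob_line q \<alpha>) = q" and "card (frob_line q \<beta>) = q"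
proof -
  let ?\<Phi> = "\<lambda>x. (x + \<alpha> * x ^ q, x + \<beta> * x ^ q)"
  let ?A = "frob_line q \<alpha>" and ?B = "frob_line q \<beta>"
  have inj: "inj ?\<Phi>"
  proof (rule injI)
    fix x y :: 'a
    assume "?\<Phi> x = ?\<Phi> y"
    then have "(x + \<alpha> * x ^ q) - (x + \<beta> * x ^ q) = (y + \<alpha> * y ^ q) - (y + \<beta> * y ^ q)"
      by simp
    then have "(\<alpha> - \<beta>) * x ^ q = (\<alpha> - \<beta>) * y ^ q"
      by (simp add: algebra_simps)
    then have "(x ^ q) ^ q = (y ^ q) ^ q"
      using \<open>\<alpha> \<noteq> \<beta>\<close> by simp
    then show "x = y"
      by (simp add: frob_invol)
  qed
  have sub: "range ?\<Phi> \<subseteq> ?A \<times> ?B"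
    using frob_trace_in_frob_line[OF frob_add frob_invol] assms(8,9) by auto
  have "q * q \<le> card ?A * card ?B"
    using card_mono[OF _ sub] card_image[OF inj] card by (simp add: card_cartesian_product power2_eq_square)
  moreover have "card ?A \<le> q" and "card ?B \<le> q"
    using card_frob_line_le assms(4-6) by auto
  ultimately show card_A: "card ?A = q" and card_B: "card ?B = q"
    using factors_eq_of_square_le[of "card ?A" q "card ?B"] by simp_all
  have "range ?\<Phi> = ?A \<times> ?B"
    using sub card_image[OF inj] card card_A card_B
    by (intro card_subset_eq) (auto simp: card_cartesian_product power2_eq_square)
  then show "bij_betw ?\<Phi> UNIV (?A \<times> ?B)"
    using inj by (simp add: bij_betw_def)
qed

lemma sum_of_powers_in_frob_line:
  fixes \<alpha> \<beta> \<epsilon> :: "'a::field"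
  assumes frob_add: "\<And>x y::'a. (x + y) ^ q = x ^ q + y ^ q"
    and "q > 0" and "\<epsilon> \<noteq> 0" and "\<epsilon> ^ (q - 1) * \<alpha> ^ m = \<beta> ^ n"
    and "u \<in> frob_line q \<alpha>" and "v \<in> frob_line q \<beta>"
  shows "u ^ m + \<epsilon> * v ^ n \<in> frob_line q (\<alpha> ^ m)"
proof -
  have "\<epsilon> * v ^ n \<in> frob_line q (\<beta> ^ n / \<epsilon> ^ (q - 1))"
    using mult_in_frob_line[OF power_in_frob_line[OF assms(6)] assms(3,2)] .
  also have "\<beta> ^ n / \<epsilon> ^ (q - 1) = \<alpha> ^ m"
    using assms(3,4) by (simp add: field_simps)
  finally have "\<epsilon> * v ^ n \<in> frob_line q (\<alpha> ^ m)" .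
  then show ?thesis
    using frob_line_add[OF frob_add power_in_frob_line[OF assms(5)]] by blast
qed

lemma sum_of_powers_not_inj_on:
  fixes \<alpha> \<beta> \<epsilon> :: "'a::field"
  assumes frob_add: "\<And>x y::'a. (x + y) ^ q = x ^ q + y ^ q"
    and "q \<ge> 2" and "\<alpha> \<noteq> 0" and "\<epsilon> \<noteq> 0"
    and "card (frob_line q \<alpha>) = q" and "card (frob_line q \<beta>) = q"
    and "\<epsilon> ^ (q - 1) * \<alpha> ^ m = \<beta> ^ n"
  shows "\<not> inj_on (\<lambda>(u, v). u ^ m + \<epsilon> * v ^ n) (frob_line q \<alpha> \<times> frob_line q \<beta>)"
proof
  let ?g = "\<lambda>(u, v). u ^ m + \<epsilon> * v ^ n" and ?D = "frob_line q \<alpha> \<times> frob_line q \<beta>"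
  assume inj: "inj_on ?g ?D"
  have "?g ` ?D \<subseteq> frob_line q (\<alpha> ^ m)"
    using sum_of_powers_in_frob_line[OF frob_add _ assms(4,7)] \<open>q \<ge> 2\<close> by auto
  then have "card ?D \<le> card (frob_line q (\<alpha> ^ m))"
    using \<open>\<alpha> \<noteq> 0\<close> \<open>q \<ge> 2\<close> by (intro card_inj_on_le[OF inj] finite_frob_line) simp_all
  also have "\<dots> \<le> q"
    using \<open>\<alpha> \<noteq> 0\<close> \<open>q \<ge> 2\<close> by (intro card_frob_line_le) simp_all
  finally show False
    using assms(2,5,6) by (simp add: card_cartesian_product)
qed

lemma inj_on_sum_of_powers:
  fixes \<alpha> \<beta> \<epsilon> :: "'a::field"
  assumes frob_add: "\<And>x y::'a. (x + y) ^ q = x ^ q + y ^ q"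
    and "q > 0" and "\<epsilon> \<noteq> 0" and "\<epsilon> ^ (q - 1) * \<alpha> ^ m \<noteq> \<beta> ^ n"
    and inj_m: "inj_on (\<lambda>u. u ^ m) (frob_line q \<alpha>)"
    and inj_n: "inj_on (\<lambda>v. v ^ n) (frob_line q \<beta>)"
  shows "inj_on (\<lambda>(u, v). u ^ m + \<epsilon> * v ^ n) (frob_line q \<alpha> \<times> frob_line q \<beta>)"
proof (rule inj_onI, clarify)
  fix u1 v1 u2 v2
  assume u: "u1 \<in> frob_line q \<alpha>" "u2 \<in> frob_line q \<alpha>"
    and v: "v1 \<in> frob_line q \<beta>" "v2 \<in> frob_line q \<beta>"
    and eq: "u1 ^ m + \<epsilon> * v1 ^ n = u2 ^ m + \<epsilon> * v2 ^ n"
  define d where "d = u1 ^ m - u2 ^ m"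
  have d_eq: "d = \<epsilon> * (v2 ^ n - v1 ^ n)"
    using eq by (simp add: d_def algebra_simps)
  have "d \<in> frob_line q (\<alpha> ^ m)"
    unfolding d_def using frob_line_diff[OF frob_add] power_in_frob_line u by blast
  moreover have "d \<in> frob_line q (\<beta> ^ n / \<epsilon> ^ (q - 1))"
    unfolding d_eq using mult_in_frob_line[OF _ assms(3,2)] frob_line_diff[OF frob_add] power_in_frob_line v
    by blast
  moreover have "\<alpha> ^ m \<noteq> \<beta> ^ n / \<epsilon> ^ (q - 1)"
    using assms(3,4) by (auto simp: field_simps)
  ultimately have "d = 0"
    using frob_lines_disjoint \<open>q > 0\<close> by blast
  then have "u1 ^ m = u2 ^ m" and "v1 ^ n = v2 ^ n"
    using d_eq \<open>\<epsilon> \<noteq> 0\<close> by (simp_all add: d_def)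
  then show "u1 = u2 \<and> v1 = v2"
    using inj_onD[OF inj_m _ u] inj_onD[OF inj_n _ v] by simp
qed

lemma inj_on_sum_of_powers_iff:
  fixes \<alpha> \<beta> \<epsilon> :: "'a::field"
  assumes frob_add: "\<And>x y::'a. (x + y) ^ q = x ^ q + y ^ q"
    and "q \<ge> 2" and "\<alpha> \<noteq> 0" and "\<epsilon> \<noteq> 0" and "m > 0" and "n > 0"
    and "card (frob_line q \<alpha>) = q" and "card (frob_line q \<beta>) = q"
  shows "inj_on (\<lambda>(u, v). u ^ m + \<epsilon> * v ^ n) (frob_line q \<alpha> \<times> frob_line q \<beta>) \<longleftrightarrow>
    inj_on (\<lambda>u. u ^ m) (frob_line q \<alpha>) \<and> inj_on (\<lambda>v. v ^ n) (frob_line q \<beta>) \<and>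
    \<epsilon> ^ (q - 1) * \<alpha> ^ m \<noteq> \<beta> ^ n"
    (is "inj_on ?g (?A \<times> ?B) \<longleftrightarrow> _")
proof
  assume inj: "inj_on ?g (?A \<times> ?B)"
  have "0 \<in> ?A" and "0 \<in> ?B"
    using \<open>q \<ge> 2\<close> by (simp_all add: zero_in_frob_line)
  have "inj_on (\<lambda>u. ?g (u, 0)) ?A" and "inj_on (\<lambda>v. ?g (0, v)) ?B"
    using inj_onD[OF inj] \<open>0 \<in> ?A\<close> \<open>0 \<in> ?B\<close> by (auto intro!: inj_onI)
  then have "inj_on (\<lambda>u. u ^ m) ?A" and "inj_on (\<lambda>v. v ^ n) ?B"
    using \<open>m > 0\<close> \<open>n > 0\<close> \<open>\<epsilon> \<noteq> 0\<close> by (simp_all add: zero_power inj_on_def)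
  moreover have "\<epsilon> ^ (q - 1) * \<alpha> ^ m \<noteq> \<beta> ^ n"
    using sum_of_powers_not_inj_on[OF frob_add assms(2-4,7,8)] inj by blast
  ultimately show "inj_on (\<lambda>u. u ^ m) ?A \<and> inj_on (\<lambda>v. v ^ n) ?B \<and> \<epsilon> ^ (q - 1) * \<alpha> ^ m \<noteq> \<beta> ^ n"
    by blast
next
  assume "inj_on (\<lambda>u. u ^ m) ?A \<and> inj_on (\<lambda>v. v ^ n) ?B \<and> \<epsilon> ^ (q - 1) * \<alpha> ^ m \<noteq> \<beta> ^ n"
  then show "inj_on ?g (?A \<times> ?B)"
    using inj_on_sum_of_powers[OF frob_add _ \<open>\<epsilon> \<noteq> 0\<close>] \<open>q \<ge> 2\<close> by simp
qed

lemma bij_comp_iff_inj_on: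
  fixes \<Phi> :: "'a::finite \<Rightarrow> 'b" and g :: "'b \<Rightarrow> 'a"
  assumes "bij_betw \<Phi> UNIV S"
  shows "bij (g \<circ> \<Phi>) \<longleftrightarrow> inj_on g S"
proof -
  have "bij (g \<circ> \<Phi>) \<longleftrightarrow> inj (g \<circ> \<Phi>)"
    using finite_UNIV_inj_surj[of "g \<circ> \<Phi>"] by (auto simp: bij_def)
  also have "\<dots> \<longleftrightarrow> inj_on g S"
    using assms comp_inj_on_iff[of \<Phi> UNIV g] by (auto simp: bij_betw_def)
  finally show ?thesis .
qed

theorem proposition3p1:
  fixes \<alpha> \<beta> \<epsilon> :: "'a::{field,finite}" and q m n :: nat
  assumes "primepow q"
    and "card (UNIV :: 'a set) = q ^ 2"
    and "m > 0" and "n > 0"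
    and "\<alpha> \<noteq> 0" and "\<beta> \<noteq> 0" and "\<alpha> \<noteq> \<beta>"
    and "\<alpha> ^ (q + 1) = 1" and "\<beta> ^ (q + 1) = 1"
    and "\<epsilon> \<noteq> 0"
  shows "is_permutation_map (\<lambda>x. (x + \<alpha> * x ^ q) ^ m + \<epsilon> * (x + \<beta> * x ^ q) ^ n)
     \<longleftrightarrow> (gcd (m * n) (q - 1) = 1 \<and> \<epsilon> ^ (q - 1) * \<alpha> ^ m \<noteq> \<beta> ^ n)"
proof -
  have "q \<ge> 2"
    using primepow_gt_Suc_0[OF assms(1)] by simp
  have frob_add: "(x + y) ^ q = x ^ q + y ^ q" for x y :: 'a
    using frobenius_add[OF assms(1,2)] by simp
  have frob_invol: "(x ^ q) ^ q = x" for x :: 'a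
    using power_card_eq_self[of x] assms(2) by (simp add: power2_eq_square power_mult)
  note lines = frob_pair_bij[OF frob_add frob_invol assms(2) \<open>q \<ge> 2\<close> assms(5-9)]
  have "(\<lambda>x. (x + \<alpha> * x ^ q) ^ m + \<epsilon> * (x + \<beta> * x ^ q) ^ n) =
      (\<lambda>(u, v). u ^ m + \<epsilon> * v ^ n) \<circ> (\<lambda>x. (x + \<alpha> * x ^ q, x + \<beta> * x ^ q))"
    by auto
  then have "is_permutation_map (\<lambda>x. (x + \<alpha> * x ^ q) ^ m + \<epsilon> * (x + \<beta> * x ^ q) ^ n) \<longleftrightarrow>
      inj_on (\<lambda>(u, v). u ^ m + \<epsilon> * v ^ n) (frob_line q \<alpha> \<times> frob_line q \<beta>)"
    unfolding is_permutation_map_def using bij_comp_iff_inj_on[OF lines(1)] by simp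
  also have "\<dots> \<longleftrightarrow> coprime m (q - 1) \<and> coprime n (q - 1) \<and> \<epsilon> ^ (q - 1) * \<alpha> ^ m \<noteq> \<beta> ^ n"
    using inj_on_sum_of_powers_iff[OF frob_add \<open>q \<ge> 2\<close> assms(5,10,3,4) lines(2,3)]
      inj_on_power_frob_line_iff[OF lines(2) \<open>q \<ge> 2\<close> assms(3)]
      inj_on_power_frob_line_iff[OF lines(3) \<open>q \<ge> 2\<close> assms(4)]
    by simp
  also have "\<dots> \<longleftrightarrow> gcd (m * n) (q - 1) = 1 \<and> \<epsilon> ^ (q - 1) * \<alpha> ^ m \<noteq> \<beta> ^ n"
    by (simp only: coprime_iff_gcd_eq_1[symmetric] coprime_mult_left_iff conj_assoc)
  finally show ?thesis .
qed

end
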